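(* Let $m\ge 3$, $H=B(l_1,\ldots,l_m)$ and $G=H^2$. Then $G$ is equitably $k$-choosable for every $k\ge m+3$.
   Context: All graphs are finite and simple. For $m,l_1,\ldots,l_m\in\mathbb{N}$ with $l_1\le\cdots\le l_m$, $B(l_1,\ldots,l_m)$ is the graph with vertex set $\{u\}\cup\{v_{i,j}: i\in[m], j\in[l_i]\}$ in which, for each $i\in[m]$, consecutive vertices in the sequence $u, v_{i,1},\ldots,v_{i,l_i}$ are adjacent (and there are no other edges). For a graph $H$, $H^2$ has vertex set $V(H)$ with two vertices adjacent iff their distance in $H$ is 1 or 2. A $k$-assignment $L$ assigns to each vertex a set of exactly $k$ colors; an equitable $L$-coloring of $G$ is a proper coloring $f$ with $f(v)\in L(v)$ such that no color is used more than $\lceil |V(G)|/k\rceil$ times; $G$ is equitably $k$-choosable if it has an equitable $L$-coloring for every $k$-assignment $L$. *)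

theory Defs
  imports Complex_Main
begin

text \<open>Spider B(l_1,...,l_m): centre u = (0,0); v_{i,j} = (i,j) for 1 <= i <= m, 1 <= j <= l i.\<close>
definition spider_V :: "nat \<Rightarrow> (nat \<Rightarrow> nat) \<Rightarrow> (nat \<times> nat) set" where
  "spider_V m l = {(0,0)} \<union> {(i,j). 1 \<le> i \<and> i \<le> m \<and> 1 \<le> j \<and> j \<le> l i}"

definition spider_E :: "nat \<Rightarrow> (nat \<Rightarrow> nat) \<Rightarrow> (nat \<times> nat) \<Rightarrow> (nat \<times> nat) \<Rightarrow> bool" where
  "spider_E m l x y \<longleftrightarrow> x \<in> spider_V m l \<and> y \<in> spider_V m l \<and>
     ((x = (0,0) \<and> fst y \<ge> 1 \<and> snd y = 1) \<or>
      (y = (0,0) \<and> fst x \<ge> 1 \<and> snd x = 1) \<or>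
      (fst x \<ge> 1 \<and> fst x = fst y \<and> (snd y = snd x + 1 \<or> snd x = snd y + 1)))"

definition graph_square :: "'v set \<Rightarrow> ('v \<Rightarrow> 'v \<Rightarrow> bool) \<Rightarrow> 'v \<Rightarrow> 'v \<Rightarrow> bool" where
  "graph_square V E x y \<longleftrightarrow> x \<in> V \<and> y \<in> V \<and> x \<noteq> y \<and>
     (E x y \<or> (\<exists>z\<in>V. E x z \<and> E z y))"

definition k_assignment :: "'v set \<Rightarrow> nat \<Rightarrow> ('v \<Rightarrow> 'c set) \<Rightarrow> bool" where
  "k_assignment V k L \<longleftrightarrow> (\<forall>v\<in>V. finite (L v) \<and> card (L v) = k)"

definition equitable_L_coloring ::
    "'v set \<Rightarrow> ('v \<Rightarrow> 'v \<Rightarrow> bool) \<Rightarrow> nat \<Rightarrow> ('v \<Rightarrow> 'c set) \<Rightarrow> ('v \<Rightarrow> 'c) \<Rightarrow> bool" where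
  "equitable_L_coloring V E k L f \<longleftrightarrow>
     (\<forall>v\<in>V. f v \<in> L v) \<and>
     (\<forall>x\<in>V. \<forall>y\<in>V. E x y \<longrightarrow> f x \<noteq> f y) \<and>
     (\<forall>c. real (card {v\<in>V. f v = c}) \<le> of_int \<lceil>real (card V) / real k\<rceil>)"

text \<open>Colours are taken from an arbitrary type 'c (universally quantified).\<close>
definition equitably_choosable :: "'v set \<Rightarrow> ('v \<Rightarrow> 'v \<Rightarrow> bool) \<Rightarrow> nat \<Rightarrow> 'c itself \<Rightarrow> bool" where
  "equitably_choosable V E k (_::'c itself) \<longleftrightarrow>
     (\<forall>L :: 'v \<Rightarrow> 'c set. k_assignment V k L \<longrightarrow> (\<exists>f. equitable_L_coloring V E k L f))"

end

theory Submission
  imports Defs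
begin

text \<open>By induction on n, the vertex set W of every sub-spider B(h_1, ..., h_m) with n + 1 vertices
  has an equitable L-coloring for the edges of G. If n + 1 > k, remove a k-set S from W so that
  W - S is again a sub-spider, color W - S by induction and give S k distinct colors: this adds at
  most one vertex to every color class and keeps the bound \<lceil>(n + 1)/k\<rceil>. Following Kierstead
  and Kostochka, the greedy step succeeds if S can be listed so that its i-th vertex has at most
  k - i neighbors in W - S. If some leg has at least three vertices, S consists of leg ends, one
  leg losing at least three vertices; otherwise all legs have length at most 2, and W - S is a
  set of vertices adjacent to the center.\<close>

section \<open>Greedy extension of equitable list colorings\<close>

definition degree_into :: "('v \<Rightarrow> 'v \<Rightarrow> bool) \<Rightarrow> 'v set \<Rightarrow> 'v \<Rightarrow> nat" where
  "degree_into G A x = card {z\<in>A. G x z}"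

text \<open>Listing S by non-increasing degree into A, the vertex in position i then has at most k - i
  neighbors in A: the ordering condition of Kierstead and Kostochka's extension lemma.\<close>
definition greedy_orderable :: "('v \<Rightarrow> 'v \<Rightarrow> bool) \<Rightarrow> 'v set \<Rightarrow> 'v set \<Rightarrow> nat \<Rightarrow> bool" where
  "greedy_orderable G A S k \<longleftrightarrow>
     (\<forall>x\<in>S. card {y\<in>S. degree_into G A x \<le> degree_into G A y} + degree_into G A x \<le> k)"

text \<open>The last clause is the bound \<lceil>card W / k\<rceil> on the color classes, in integer form.\<close>
definition equitable_coloring_on ::
    "('v \<Rightarrow> 'v \<Rightarrow> bool) \<Rightarrow> ('v \<Rightarrow> 'c set) \<Rightarrow> nat \<Rightarrow> 'v set \<Rightarrow> ('v \<Rightarrow> 'c) \<Rightarrow> bool" where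
  "equitable_coloring_on G L k W f \<longleftrightarrow>
     (\<forall>v\<in>W. f v \<in> L v) \<and> (\<forall>x\<in>W. \<forall>y\<in>W. G x y \<longrightarrow> f x \<noteq> f y) \<and>
     (\<forall>c. card {v\<in>W. f v = c} * k < card W + k)"

lemma greedy_orderable_mono:
  assumes "greedy_orderable G A S k" "T \<subseteq> S" "finite S"
  shows "greedy_orderable G A T k"
  unfolding greedy_orderable_def
proof
  fix x assume "x \<in> T"
  have "card {y\<in>T. degree_into G A x \<le> degree_into G A y}
          \<le> card {y\<in>S. degree_into G A x \<le> degree_into G A y}"
    using assms(2,3) by (intro card_mono) auto
  then show "card {y\<in>T. degree_into G A x \<le> degree_into G A y} + degree_into G A x \<le> k"
    using assms(1,2) \<open>x \<in> T\<close> unfolding greedy_orderable_def by fastforce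
qed

lemma greedy_injective_coloring:
  assumes "finite A" "finite S" "\<forall>x\<in>S. card (L x) = k" "greedy_orderable G A S k"
  shows "\<exists>g. (\<forall>x\<in>S. g x \<in> L x) \<and> inj_on g S \<and> (\<forall>x\<in>S. \<forall>z\<in>A. G x z \<longrightarrow> g x \<noteq> f z)"
  using assms(2-)
proof (induction S rule: finite_remove_induct)
  case empty
  then show ?case by simp
next
  case (remove S)
  let ?d = "degree_into G A"
  obtain x where x: "x \<in> S" and x_Min: "?d x = Min (?d ` S)"
    using Min_in[of "?d ` S"] \<open>finite S\<close> \<open>S \<noteq> {}\<close> by fastforce
  have x_min: "\<forall>y\<in>S. ?d x \<le> ?d y" using x_Min \<open>finite S\<close> by simp
  obtain g where g_list: "\<forall>y\<in>S - {x}. g y \<in> L y" and g_inj: "inj_on g (S - {x})"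
    and g_proper: "\<forall>y\<in>S - {x}. \<forall>z\<in>A. G y z \<longrightarrow> g y \<noteq> f z"
    using remove.IH[OF x] remove.prems greedy_orderable_mono[of G A S k "S - {x}"] \<open>finite S\<close>
    by auto
  define F where "F = g ` (S - {x}) \<union> f ` {z\<in>A. G x z}"
  have "{y\<in>S. ?d x \<le> ?d y} = S" using x_min by auto
  then have "card S + ?d x \<le> k" using remove.prems(2) x unfolding greedy_orderable_def by fastforce
  moreover have "card F \<le> card (S - {x}) + ?d x"
    unfolding F_def degree_into_def
    by (rule order_trans[OF card_Un_le add_mono[OF card_image_le card_image_le]])
      (use \<open>finite S\<close> \<open>finite A\<close> in auto)
  moreover have "card S > 0" using x \<open>finite S\<close> by (auto simp: card_gt_0_iff)
  ultimately have "card F < card (L x)" using remove.prems(1) x by simp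
  then have "\<not> L x \<subseteq> F"
    using card_mono[of F "L x"] \<open>finite S\<close> \<open>finite A\<close> unfolding F_def by auto
  then obtain c where c: "c \<in> L x" "c \<notin> F" by auto
  have S_eq: "S = insert x (S - {x})" using x by auto
  show ?case
  proof (intro exI[of _ "g(x := c)"] conjI)
    show "\<forall>y\<in>S. (g(x := c)) y \<in> L y" using g_list c(1) by auto
    show "inj_on (g(x := c)) S" using g_inj c(2) S_eq unfolding F_def
      by (auto simp: inj_on_def)
    show "\<forall>y\<in>S. \<forall>z\<in>A. G y z \<longrightarrow> (g(x := c)) y \<noteq> f z" using g_proper c(2) unfolding F_def by auto
  qed
qed

lemma card_fibre_le_1_if_inj_on:
  assumes "inj_on g S"
  shows "card {v\<in>S. g v = c} \<le> 1"
  using card_inj_on_le[of g "{v\<in>S. g v = c}" "{c}"] inj_on_subset[OF assms] by auto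

text \<open>The vertices of W - A receive k distinct colors, so every color class grows by at most one
  while card W exceeds card A by k.\<close>
lemma equitable_coloring_extend:
  assumes "finite W" "A \<subseteq> W" "card (W - A) = k" "\<forall>x\<in>W - A. card (L x) = k"
    and orderable: "greedy_orderable G A (W - A) k"
    and f: "equitable_coloring_on G L k A f"
    and "symp G" "irreflp G"
  shows "\<exists>f'. equitable_coloring_on G L k W f'"
proof -
  obtain g where g_list: "\<forall>x\<in>W - A. g x \<in> L x" and g_inj: "inj_on g (W - A)"
    and g_proper: "\<forall>x\<in>W - A. \<forall>z\<in>A. G x z \<longrightarrow> g x \<noteq> f z"
    using greedy_injective_coloring[OF finite_subset[OF assms(2,1)] _ assms(4) orderable] assms(1) by blast
  define f' where "f' = (\<lambda>v. if v \<in> A then f v else g v)"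
  have "f' x \<noteq> f' y" if "x \<in> W" "y \<in> W" "G x y" for x y
  proof (cases "x \<in> A"; cases "y \<in> A")
    assume "x \<in> A" "y \<in> A"
    then show ?thesis using f \<open>G x y\<close> unfolding f'_def equitable_coloring_on_def by auto
  next
    assume "x \<in> A" "y \<notin> A"
    then show ?thesis
      using g_proper[rule_format, of y x] \<open>y \<in> W\<close> sympD[OF \<open>symp G\<close> \<open>G x y\<close>] unfolding f'_def by auto
  next
    assume "x \<notin> A" "y \<in> A"
    then show ?thesis using g_proper[rule_format, of x y] \<open>x \<in> W\<close> \<open>G x y\<close> unfolding f'_def by auto
  next
    assume "x \<notin> A" "y \<notin> A"
    moreover have "x \<noteq> y" using \<open>G x y\<close> \<open>irreflp G\<close> unfolding irreflp_def by auto
    ultimately show ?thesis using g_inj that(1,2) unfolding f'_def inj_on_def by auto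
  qed
  moreover have "\<forall>v\<in>W. f' v \<in> L v" using f g_list unfolding f'_def equitable_coloring_on_def by auto
  moreover have "card {v\<in>W. f' v = c} * k < card W + k" for c
  proof -
    have "card {v\<in>W - A. g v = c} \<le> 1"
      using g_inj by (rule card_fibre_le_1_if_inj_on)
    moreover have "{v\<in>W. f' v = c} = {v\<in>A. f v = c} \<union> {v\<in>W - A. g v = c}"
      using \<open>A \<subseteq> W\<close> unfolding f'_def by auto
    ultimately have "card {v\<in>W. f' v = c} \<le> card {v\<in>A. f v = c} + 1"
      using card_Un_le[of "{v\<in>A. f v = c}" "{v\<in>W - A. g v = c}"] by simp
    then have "card {v\<in>W. f' v = c} * k \<le> (card {v\<in>A. f v = c} + 1) * k"
      by (rule mult_right_mono) simp
    moreover have "card W = card A + k"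
      using assms(1-3) card_mono[OF assms(1,2)] by (simp add: card_Diff_subset finite_subset)
    moreover have "card {v\<in>A. f v = c} * k < card A + k"
      using f unfolding equitable_coloring_on_def by blast
    ultimately show ?thesis by (simp add: algebra_simps)
  qed
  ultimately show ?thesis unfolding equitable_coloring_on_def by blast
qed

lemma equitable_coloring_small:
  assumes "finite W" "card W \<le> k" "k > 0" "\<forall>x\<in>W. card (L x) = k" "irreflp G"
  shows "\<exists>f. equitable_coloring_on G L k W f"
proof -
  have "greedy_orderable G {} W k"
    using assms(1,2) card_mono[OF assms(1), of "{y\<in>W. True}"]
    by (simp add: greedy_orderable_def degree_into_def)
  then obtain g where g_list: "\<forall>x\<in>W. g x \<in> L x" and g_inj: "inj_on g W"
    using greedy_injective_coloring[of "{}" W L k G] assms(1,4) by blast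
  have "card {v\<in>W. g v = c} * k < card W + k" for c
  proof -
    have "card {v\<in>W. g v = c} \<le> 1"
      using g_inj by (rule card_fibre_le_1_if_inj_on)
    moreover have "card {v\<in>W. g v = c} \<le> card W" using assms(1) by (intro card_mono) auto
    ultimately show ?thesis using \<open>k > 0\<close> by (cases "card {v\<in>W. g v = c}") auto
  qed
  then show ?thesis using g_list g_inj \<open>irreflp G\<close>
    unfolding equitable_coloring_on_def inj_on_def irreflp_def by metis
qed

lemma of_nat_le_ceiling_divide:
  fixes q n k :: nat
  assumes "k > 0" "q * k < n + k"
  shows "real q \<le> of_int \<lceil>real n / real k\<rceil>"
proof -
  have "(real q - 1) * real k < real n"
    using assms by (simp add: algebra_simps flip: of_nat_mult of_nat_add)
  then have "real q - 1 < real n / real k" using assms(1) by (simp add: pos_less_divide_eq)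
  then have "int q \<le> \<lceil>real n / real k\<rceil>" by (simp add: le_ceiling_iff)
  then show ?thesis by linarith
qed

lemma equitable_L_coloring_if_equitable_coloring_on:
  assumes "equitable_coloring_on G L k V f" "k > 0"
  shows "equitable_L_coloring V G k L f"
  using assms of_nat_le_ceiling_divide
  unfolding equitable_coloring_on_def equitable_L_coloring_def by blast

section \<open>Squares of spiders\<close>

abbreviation spider_square :: "nat \<Rightarrow> (nat \<Rightarrow> nat) \<Rightarrow> nat \<times> nat \<Rightarrow> nat \<times> nat \<Rightarrow> bool" where
  "spider_square m l \<equiv> graph_square (spider_V m l) (spider_E m l)"

lemma spider_V_eq: "spider_V m h = insert (0, 0) (SIGMA i:{1..m}. {1..h i})"
  by (auto simp: spider_V_def)

lemma finite_spider_V: "finite (spider_V m h)"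
  unfolding spider_V_eq by auto

lemma card_spider_V: "card (spider_V m h) = Suc (\<Sum>i\<in>{1..m}. h i)"
  unfolding spider_V_eq by (subst card_insert_disjoint) (auto simp: card_SigmaI)

lemma spider_V_mono: "\<forall>i\<in>{1..m}. h' i \<le> h i \<Longrightarrow> spider_V m h' \<subseteq> spider_V m h"
  unfolding spider_V_def by force

lemma mem_spider_V_diff:
  "(i, j) \<in> spider_V m h - spider_V m h' \<longleftrightarrow> 1 \<le> i \<and> i \<le> m \<and> h' i < j \<and> j \<le> h i"
  unfolding spider_V_def by auto

lemma spider_E_sym: "spider_E m l x y \<Longrightarrow> spider_E m l y x"
  unfolding spider_E_def by auto

lemma symp_spider_square: "symp (spider_square m l)"
  unfolding symp_def graph_square_def using spider_E_sym by blast

lemma irreflp_spider_square: "irreflp (spider_square m l)"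
  unfolding irreflp_def graph_square_def by blast

lemma spider_square_neighbor:
  assumes "spider_square m l (i, j) y" "1 \<le> i"
  shows "y = (i, j + 1) \<or> y = (i, j + 2) \<or> (2 \<le> j \<and> y = (i, j - 1)) \<or> (3 \<le> j \<and> y = (i, j - 2))
     \<or> (j \<le> 2 \<and> y = (0, 0)) \<or> (j = 1 \<and> (\<exists>t. y = (t, 1) \<and> 1 \<le> t \<and> t \<le> m))"
proof -
  obtain a b where "y = (a, b)" by fastforce
  then show ?thesis using assms unfolding graph_square_def spider_E_def spider_V_def by auto
qed

lemma spider_square_neighbor_below:
  assumes "spider_square m l (i, j) z" "z \<in> spider_V m h" "1 \<le> i" "h i < j"
  shows "(j = h i + 1 \<and> 2 \<le> j \<and> z = (i, j - 1)) \<or> (3 \<le> j \<and> j \<le> h i + 2 \<and> z = (i, j - 2))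
     \<or> (j \<le> 2 \<and> z = (0, 0)) \<or> (j = 1 \<and> (\<exists>t. z = (t, 1) \<and> 1 \<le> t \<and> t \<le> m \<and> 1 \<le> h t))"
  using spider_square_neighbor[OF assms(1,3)] assms(2,4) by (auto simp: spider_V_def)

lemma degree_into_spider_far:
  assumes "1 \<le> i" "h i + 3 \<le> j"
  shows "degree_into (spider_square m l) (spider_V m h) (i, j) = 0"
proof -
  have "{z\<in>spider_V m h. spider_square m l (i, j) z} = {}"
    using spider_square_neighbor_below[of m l i j _ h] assms by fastforce
  then show ?thesis unfolding degree_into_def by (simp only: card.empty)
qed

lemma degree_into_spider_le_2:
  assumes "1 \<le> i" "h i < j" "2 \<le> j"
  shows "degree_into (spider_square m l) (spider_V m h) (i, j) \<le> 2"
proof -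
  have "{z\<in>spider_V m h. spider_square m l (i, j) z} \<subseteq> {(i, j - 1), if 3 \<le> j then (i, j - 2) else (0, 0)}"
    using spider_square_neighbor_below[of m l i j _ h] assms by fastforce
  from card_mono[OF _ this] show ?thesis
    unfolding degree_into_def by (simp add: card_insert_if split: if_splits)
qed

lemma degree_into_spider_le_1:
  assumes "1 \<le> i" "h i < j" "2 \<le> j" "j \<noteq> h i + 1"
  shows "degree_into (spider_square m l) (spider_V m h) (i, j) \<le> 1"
proof -
  have "{z\<in>spider_V m h. spider_square m l (i, j) z} \<subseteq> {if 3 \<le> j then (i, j - 2) else (0, 0)}"
    using spider_square_neighbor_below[of m l i j _ h] assms by fastforce
  from card_mono[OF _ this] show ?thesis unfolding degree_into_def by simp
qed

lemma degree_into_spider_first: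
  assumes "1 \<le> i" "h i = 0"
  shows "degree_into (spider_square m l) (spider_V m h) (i, 1) \<le> 1 + card {t\<in>{1..m}. 1 \<le> h t}"
proof -
  let ?P = "{t\<in>{1..m}. 1 \<le> h t}"
  have "{z\<in>spider_V m h. spider_square m l (i, 1) z} \<subseteq> insert (0, 0) ((\<lambda>t. (t, 1)) ` ?P)"
    using spider_square_neighbor_below[of m l i 1 _ h] assms by fastforce
  then have "degree_into (spider_square m l) (spider_V m h) (i, 1) \<le> card (insert (0, 0) ((\<lambda>t. (t, 1::nat)) ` ?P))"
    unfolding degree_into_def by (intro card_mono) auto
  also have "\<dots> \<le> 1 + card ?P"
    using card_insert_le_m1 card_image_le[of ?P "\<lambda>t. (t, 1::nat)"] by (simp add: card_insert_if)
  finally show ?thesis .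
qed

lemma leg_tip_degree_ge_2:
  assumes "(i, j) \<in> spider_V m h - spider_V m h'"
    and "2 \<le> degree_into (spider_square m l) (spider_V m h') (i, j)"
  shows "j = h' i + 1"
proof -
  have "1 \<le> i" "h' i < j" using assms(1) unfolding mem_spider_V_diff by auto
  then show ?thesis using assms(2) degree_into_spider_le_1[of i h' j m l] by (cases "2 \<le> j") auto
qed

lemma leg_tip_degree_ge_3:
  assumes "(i, j) \<in> spider_V m h - spider_V m h'"
    and "3 \<le> degree_into (spider_square m l) (spider_V m h') (i, j)"
  shows "j = 1"
proof -
  have "1 \<le> i" "h' i < j" using assms(1) unfolding mem_spider_V_diff by auto
  then show ?thesis using assms(2) degree_into_spider_le_2[of i h' j m l] by (cases "2 \<le> j") auto
qed

text \<open>Removed vertices have degree 0 into the remaining sub-spider from the third vertex past a leg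
  end on, at most 1 except at the new leg ends, and at least 3 only at the first vertex of a leg
  removed entirely; the leg i0, shortened by three, provides a vertex of degree 0.\<close>
lemma greedy_orderable_leg_tips:
  assumes km: "m + 3 \<le> k" and card_S: "card (spider_V m h - spider_V m h') = k"
    and i0: "i0 \<in> {1..m}" "h' i0 + 3 \<le> h i0"
  shows "greedy_orderable (spider_square m l) (spider_V m h') (spider_V m h - spider_V m h') k"
  unfolding greedy_orderable_def
proof
  define S where "S = spider_V m h - spider_V m h'"
  define d where "d = degree_into (spider_square m l) (spider_V m h')"
  have "finite S" unfolding S_def using finite_spider_V by blast
  fix x assume "x \<in> spider_V m h - spider_V m h'"
  then obtain i j where x: "x = (i, j)" "x \<in> S" unfolding S_def by (metis surj_pair)
  have "1 \<le> i" "h' i < j" using x(2) unfolding x(1) S_def mem_spider_V_diff by auto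
  let ?above = "{y\<in>S. d x \<le> d y}"
  consider "d x = 0" | "d x = 1" | "d x = 2" | "d x \<ge> 3" by linarith
  then have "card ?above + d x \<le> k"
  proof cases
    case 1
    have "card ?above \<le> card S" using \<open>finite S\<close> by (intro card_mono) auto
    then show ?thesis using 1 card_S unfolding S_def by simp
  next
    case 2
    define p where "p = (i0, h' i0 + 3)"
    have "p \<in> S" using i0 unfolding p_def S_def mem_spider_V_diff by auto
    have "d p = 0" using i0 degree_into_spider_far unfolding p_def d_def by simp
    then have "?above \<subseteq> S - {p}" using 2 by auto
    then have "card ?above \<le> card S - 1"
      using card_mono[of "S - {p}" ?above] \<open>finite S\<close> \<open>p \<in> S\<close> by simp
    then show ?thesis using 2 card_S km unfolding S_def by simp
  next
    case 3
    have above: "?above \<subseteq> (\<lambda>t. (t, h' t + 1)) ` {1..m}"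
    proof
      fix y assume y: "y \<in> ?above"
      obtain a b where y_ab: "y = (a, b)" by fastforce
      have "b = h' a + 1" using leg_tip_degree_ge_2[of a b m h h' l] y 3 unfolding y_ab S_def d_def by auto
      moreover have "a \<in> {1..m}" using y unfolding y_ab S_def mem_Collect_eq mem_spider_V_diff by auto
      ultimately show "y \<in> (\<lambda>t. (t, h' t + 1)) ` {1..m}" using y_ab by auto
    qed
    have "card ?above \<le> m"
      using card_mono[OF _ above] card_image_le[of "{1..m}" "\<lambda>t. (t, h' t + 1)"] by simp
    then show ?thesis using 3 km by simp
  next
    case 4
    let ?P = "{t\<in>{1..m}. 1 \<le> h' t}" and ?Q = "{t\<in>{1..m}. h' t = 0}"
    have "j = 1" using leg_tip_degree_ge_3 4 x unfolding S_def d_def by blast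
    then have "d x \<le> 1 + card ?P"
      using degree_into_spider_first[of i h' m l] \<open>1 \<le> i\<close> \<open>h' i < j\<close> x(1) unfolding d_def by simp
    have above: "?above \<subseteq> (\<lambda>t. (t, 1)) ` ?Q"
    proof
      fix y assume y: "y \<in> ?above"
      obtain a b where y_ab: "y = (a, b)" by fastforce
      have "b = 1" using leg_tip_degree_ge_3[of a b m h h' l] y 4 unfolding y_ab S_def d_def by auto
      moreover have "a \<in> {1..m}" "h' a < b"
        using y unfolding y_ab S_def mem_Collect_eq mem_spider_V_diff by auto
      ultimately show "y \<in> (\<lambda>t. (t, 1)) ` ?Q" using y_ab by auto
    qed
    have "card ?above \<le> card ?Q"
      using card_mono[OF _ above] card_image_le[of ?Q "\<lambda>t. (t, 1::nat)"] by simp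
    moreover have "?P \<union> ?Q = {1..m}" "?P \<inter> ?Q = {}" by auto
    then have "card ?P + card ?Q = m" using card_Un_disjoint[of ?P ?Q] by simp
    ultimately show ?thesis using \<open>d x \<le> 1 + card ?P\<close> km by simp
  qed
  then show "card {y\<in>spider_V m h - spider_V m h'. d x \<le> d y} + d x \<le> k" unfolding S_def .
qed

definition spider_first_layer :: "nat \<Rightarrow> (nat \<Rightarrow> nat) \<Rightarrow> (nat \<times> nat) set" where
  "spider_first_layer m h = (\<lambda>t. (t, 1)) ` {t\<in>{1..m}. 1 \<le> h t}"

lemma finite_spider_first_layer: "finite (spider_first_layer m h)"
  unfolding spider_first_layer_def by simp

lemma card_spider_first_layer_le: "card (spider_first_layer m h) \<le> m"
proof -
  have "card (spider_first_layer m h) \<le> card {t\<in>{1..m}. 1 \<le> h t}"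
    unfolding spider_first_layer_def by (rule card_image_le) simp
  also have "\<dots> \<le> card {1..m}" by (intro card_mono) auto
  finally show ?thesis by simp
qed

lemma spider_first_layer_subset: "spider_first_layer m h \<subseteq> spider_V m h"
  unfolding spider_first_layer_def spider_V_def by auto

lemma spider_V_short_legs:
  assumes "\<forall>i\<in>{1..m}. h i \<le> 2" "x \<in> spider_V m h"
  shows "x = (0, 0) \<or> x \<in> spider_first_layer m h \<or> (\<exists>t. x = (t, 2) \<and> (t, 1) \<in> spider_first_layer m h)"
proof -
  obtain a b where "x = (a, b)" by fastforce
  then show ?thesis using assms unfolding spider_V_def spider_first_layer_def
    by (cases "b = 1") (force simp: le_Suc_eq)+
qed

lemma card_spider_V_short_legs:
  assumes "\<forall>i\<in>{1..m}. h i \<le> 2"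
  shows "card (spider_V m h) \<le> 1 + 2 * card (spider_first_layer m h)"
proof -
  let ?L1 = "spider_first_layer m h"
  have "spider_V m h \<subseteq> insert (0, 0) (?L1 \<union> (\<lambda>z. (fst z, 2)) ` ?L1)"
    using spider_V_short_legs[OF assms] by force
  then have "card (spider_V m h) \<le> card (insert (0, 0) (?L1 \<union> (\<lambda>z. (fst z, 2::nat)) ` ?L1))"
    using finite_spider_first_layer by (intro card_mono) auto
  also have "\<dots> \<le> 1 + card (?L1 \<union> (\<lambda>z. (fst z, 2::nat)) ` ?L1)"
    using finite_spider_first_layer by (simp add: card_insert_if)
  also have "\<dots> \<le> 1 + (card ?L1 + card ((\<lambda>z. (fst z, 2::nat)) ` ?L1))"
    using card_Un_le by simp
  also have "\<dots> \<le> 1 + 2 * card ?L1" using card_image_le[OF finite_spider_first_layer] by simp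
  finally show ?thesis .
qed

lemma second_layer_neighbors_in_first_layer:
  assumes "R \<subseteq> spider_first_layer m h" "1 \<le> t"
  shows "{z\<in>R. spider_square m l (t, 2) z} \<subseteq> {(t, 1)} \<inter> R"
proof
  fix z assume z: "z \<in> {z\<in>R. spider_square m l (t, 2) z}"
  then obtain a where "z = (a, 1)" "1 \<le> a" using assms(1) unfolding spider_first_layer_def by auto
  then show "z \<in> {(t, 1)} \<inter> R" using spider_square_neighbor[of m l t 2 z] assms(2) z by auto
qed

text \<open>A second-layer vertex has degree at most 1 into R, and degree 1 only above a vertex of R,
  so those of positive degree are matched with R in the count.\<close>
lemma greedy_orderable_first_layer:
  assumes km: "m + 3 \<le> k" and short: "\<forall>i\<in>{1..m}. h i \<le> 2"
    and R: "R \<subseteq> spider_first_layer m h" and card_S: "card (spider_V m h - R) \<le> k"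
  shows "greedy_orderable (spider_square m l) R (spider_V m h - R) k"
  unfolding greedy_orderable_def
proof
  define S where "S = spider_V m h - R"
  define L1 where "L1 = spider_first_layer m h"
  define d where "d = degree_into (spider_square m l) R"
  have "finite L1" "finite R" "finite S"
    using finite_spider_first_layer R finite_subset finite_spider_V unfolding L1_def S_def by blast+
  have "card R \<le> card L1" "card L1 \<le> m" "card (L1 - R) = card L1 - card R"
    using card_mono[OF \<open>finite L1\<close>] R card_spider_first_layer_le card_Diff_subset[OF \<open>finite R\<close>]
    unfolding L1_def by auto
  have d_le: "d y \<le> card R" for y unfolding d_def degree_into_def using \<open>finite R\<close> by (intro card_mono) auto
  have d_second: "d (t, 2) \<le> card ({(t, 1)} \<inter> R)" if "1 \<le> t" for t
    using card_mono[OF _ second_layer_neighbors_in_first_layer[OF R that, of l]]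
    unfolding d_def degree_into_def by simp
  have d_second_le: "d (t, 2) \<le> 1" if "1 \<le> t" for t
    using d_second[OF that] card_mono[of "{(t, 1::nat)}" "{(t, 1)} \<inter> R"] by simp
  have d_second_pos: "(t, 1) \<in> R" if "1 \<le> t" "1 \<le> d (t, 2)" for t
    using d_second[OF that(1)] that(2) by (cases "(t, 1) \<in> R") auto
  have S_cases: "y = (0, 0) \<or> y \<in> L1 - R \<or> (\<exists>t. y = (t, 2) \<and> 1 \<le> t)" if "y \<in> S" for y
    using spider_V_short_legs[OF short, of y] that unfolding S_def L1_def spider_first_layer_def by auto
  fix x assume "x \<in> spider_V m h - R"
  let ?above = "{y\<in>S. d x \<le> d y}"
  consider "d x = 0" | "d x = 1" | "d x \<ge> 2" by linarith
  then have "card ?above + d x \<le> k"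
  proof cases
    case 1
    have "card ?above \<le> card S" using \<open>finite S\<close> by (intro card_mono) auto
    then show ?thesis using 1 card_S unfolding S_def by simp
  next
    case 2
    have above: "?above \<subseteq> insert (0, 0) (L1 - R) \<union> (\<lambda>z. (fst z, 2)) ` R"
    proof
      fix y assume y: "y \<in> ?above"
      then consider "y = (0, 0) \<or> y \<in> L1 - R" | t where "y = (t, 2)" "1 \<le> t" using S_cases by blast
      then show "y \<in> insert (0, 0) (L1 - R) \<union> (\<lambda>z. (fst z, 2)) ` R"
      proof cases
        case 2
        then have "(t, 1) \<in> R" using d_second_pos y \<open>d x = 1\<close> by auto
        then show ?thesis using \<open>y = (t, 2)\<close> by force
      qed auto
    qed
    have "card ?above \<le> card (insert (0, 0) (L1 - R) \<union> (\<lambda>z. (fst z, 2::nat)) ` R)"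
      using \<open>finite L1\<close> \<open>finite R\<close> by (intro card_mono[OF _ above]) auto
    also have "\<dots> \<le> card (insert (0, 0) (L1 - R)) + card ((\<lambda>z. (fst z, 2::nat)) ` R)"
      by (rule card_Un_le)
    also have "\<dots> \<le> (1 + card (L1 - R)) + card R"
      by (intro add_mono card_image_le \<open>finite R\<close>) (simp add: card_insert_if \<open>finite L1\<close>)
    finally show ?thesis using 2 \<open>card (L1 - R) = card L1 - card R\<close> \<open>card R \<le> card L1\<close> \<open>card L1 \<le> m\<close> km by simp
  next
    case 3
    have "?above \<subseteq> insert (0, 0) (L1 - R)"
      using S_cases d_second_le 3 by fastforce
    then have "card ?above \<le> 1 + card (L1 - R)"
      using card_mono[of "insert (0, 0) (L1 - R)" ?above] card_insert_le_m1 \<open>finite L1\<close>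
      by (simp add: card_insert_if split: if_splits)
    then show ?thesis using d_le[of x] \<open>card (L1 - R) = card L1 - card R\<close> \<open>card R \<le> card L1\<close> \<open>card L1 \<le> m\<close> km by simp
  qed
  then show "card {y\<in>spider_V m h - R. d x \<le> d y} + d x \<le> k" unfolding S_def .
qed

lemma sum_decrease_pointwise:
  fixes h :: "'a \<Rightarrow> nat"
  assumes "finite I" "k \<le> sum h I"
  shows "\<exists>h'. (\<forall>i\<in>I. h' i \<le> h i) \<and> sum h' I + k = sum h I"
  using assms(2)
proof (induction k)
  case 0
  show ?case by (intro exI[of _ h]) auto
next
  case (Suc k)
  then obtain h' where h'_le: "\<forall>i\<in>I. h' i \<le> h i" and h'_sum: "sum h' I + k = sum h I" by auto
  have "sum h' I > 0" using h'_sum Suc.prems by simp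
  then obtain i where i: "i \<in> I" "h' i > 0" by (metis neq0_conv sum.neutral)
  define h'' where "h'' = h'(i := h' i - 1)"
  have "sum h' I = h' i + sum h' (I - {i})" using assms(1) i by (simp add: sum.remove)
  moreover have "sum h'' I = h'' i + sum h'' (I - {i})" using assms(1) i by (simp add: sum.remove)
  moreover have "sum h'' (I - {i}) = sum h' (I - {i})" unfolding h''_def by (intro sum.cong) auto
  ultimately have "sum h'' I + 1 = sum h' I" using i unfolding h''_def by simp
  then show ?case using h'_le h'_sum by (intro exI[of _ h'']) (auto simp: h''_def)
qed

lemma sum_decrease_pointwise_at:
  fixes h :: "'a \<Rightarrow> nat"
  assumes "finite I" "i0 \<in> I" "t \<le> h i0" "t \<le> k" "k \<le> sum h I"
  shows "\<exists>h'. (\<forall>i\<in>I. h' i \<le> h i) \<and> sum h' I + k = sum h I \<and> h' i0 + t \<le> h i0"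
proof -
  define h1 where "h1 = h(i0 := h i0 - t)"
  have "sum h I = h i0 + sum h (I - {i0})" using assms(1,2) by (simp add: sum.remove)
  moreover have "sum h1 I = h1 i0 + sum h1 (I - {i0})" using assms(1,2) by (simp add: sum.remove)
  moreover have "sum h1 (I - {i0}) = sum h (I - {i0})" unfolding h1_def by (intro sum.cong) auto
  ultimately have "sum h1 I + t = sum h I" using assms(3) unfolding h1_def by simp
  moreover have "k - t \<le> sum h1 I" using calculation assms(5) by linarith
  ultimately obtain h' where h'_le: "\<forall>i\<in>I. h' i \<le> h1 i" and h'_sum: "sum h' I + (k - t) = sum h1 I"
    using sum_decrease_pointwise[OF assms(1), of "k - t" h1] by blast
  show ?thesis
  proof (intro exI[of _ h'] conjI)
    show "\<forall>i\<in>I. h' i \<le> h i" using h'_le unfolding h1_def by (metis diff_le_self fun_upd_apply order_trans)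
    show "sum h' I + k = sum h I" using h'_sum \<open>sum h1 I + t = sum h I\<close> assms(4) by linarith
    have "h' i0 \<le> h i0 - t" using h'_le assms(2) unfolding h1_def by force
    then show "h' i0 + t \<le> h i0" using assms(3) by linarith
  qed
qed

lemma long_leg_colorable:
  assumes km: "m + 3 \<le> k" and lists: "\<forall>x\<in>spider_V m h. card (L x) = k"
    and big: "k < card (spider_V m h)" and i0: "i0 \<in> {1..m}" "3 \<le> h i0"
    and IH: "\<And>h'. \<forall>i\<in>{1..m}. h' i \<le> h i \<Longrightarrow> (\<Sum>i\<in>{1..m}. h' i) < (\<Sum>i\<in>{1..m}. h i) \<Longrightarrow>
               \<exists>f. equitable_coloring_on (spider_square m l) L k (spider_V m h') f"
  shows "\<exists>f. equitable_coloring_on (spider_square m l) L k (spider_V m h) f"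
proof -
  have "k \<le> (\<Sum>i\<in>{1..m}. h i)" using big card_spider_V by simp
  then obtain h' where h'_le: "\<forall>i\<in>{1..m}. h' i \<le> h i"
    and h'_sum: "(\<Sum>i\<in>{1..m}. h' i) + k = (\<Sum>i\<in>{1..m}. h i)" and h'_tip: "h' i0 + 3 \<le> h i0"
    using sum_decrease_pointwise_at[of "{1..m}" i0 3 h k] i0 km by auto
  have sub: "spider_V m h' \<subseteq> spider_V m h" using spider_V_mono[OF h'_le] .
  then have card_S: "card (spider_V m h - spider_V m h') = k"
    using h'_sum by (simp add: card_Diff_subset finite_spider_V card_spider_V)
  obtain f where "equitable_coloring_on (spider_square m l) L k (spider_V m h') f"
    using IH[OF h'_le] h'_sum km by auto
  then show ?thesis
    using equitable_coloring_extend[OF finite_spider_V sub card_S _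
        greedy_orderable_leg_tips[OF km card_S i0(1) h'_tip] _ symp_spider_square irreflp_spider_square]
      lists by blast
qed

lemma short_legs_colorable:
  assumes km: "m + 3 \<le> k" and lists: "\<forall>x\<in>spider_V m h. card (L x) = k"
    and big: "k < card (spider_V m h)" and short: "\<forall>i\<in>{1..m}. h i \<le> 2"
  shows "\<exists>f. equitable_coloring_on (spider_square m l) L k (spider_V m h) f"
proof -
  let ?W = "spider_V m h" and ?L1 = "spider_first_layer m h"
  have "card ?W - k \<le> card ?L1"
    using card_spider_V_short_legs[OF short] card_spider_first_layer_le[of m h] km by linarith
  then obtain R where R: "R \<subseteq> ?L1" and card_R: "card R = card ?W - k"
    using exists_subset_between[of "{}" "card ?W - k" ?L1] finite_spider_first_layer by auto
  have "R \<subseteq> ?W" using R spider_first_layer_subset by blast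
  have "card R \<le> k" "k > 0" using card_R \<open>card ?W - k \<le> card ?L1\<close> card_spider_first_layer_le[of m h] km
    by linarith+
  then obtain f where "equitable_coloring_on (spider_square m l) L k R f"
    using equitable_coloring_small[OF finite_subset[OF R finite_spider_first_layer] _ _ _ irreflp_spider_square]
      lists \<open>R \<subseteq> ?W\<close> by blast
  moreover have card_S: "card (?W - R) = k"
    using \<open>R \<subseteq> ?W\<close> card_R big by (simp add: card_Diff_subset finite_subset[OF _ finite_spider_V])
  ultimately show ?thesis
    using equitable_coloring_extend[OF finite_spider_V \<open>R \<subseteq> ?W\<close> card_S _
        greedy_orderable_first_layer[OF km short R, of l] _ symp_spider_square irreflp_spider_square]
      lists by blast
qed

lemma subspider_colorable:
  assumes km: "m + 3 \<le> k" and lists: "\<forall>x\<in>spider_V m h. card (L x) = k"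
  shows "\<exists>f. equitable_coloring_on (spider_square m l) L k (spider_V m h) f"
  using lists
proof (induction "\<Sum>i\<in>{1..m}. h i" arbitrary: h rule: less_induct)
  case less
  consider "card (spider_V m h) \<le> k" | i0 where "k < card (spider_V m h)" "i0 \<in> {1..m}" "3 \<le> h i0"
    | "k < card (spider_V m h)" "\<forall>i\<in>{1..m}. h i \<le> 2"
    by (metis not_less_eq_eq numeral_2_eq_2 numeral_3_eq_3 not_le)
  then show ?case
  proof cases
    case 1
    moreover have "k > 0" using km by simp
    ultimately show ?thesis
      using equitable_coloring_small[OF finite_spider_V _ _ less.prems irreflp_spider_square] by blast
  next
    case 2
    show ?thesis
    proof (rule long_leg_colorable[OF km less.prems 2])
      fix h' assume "\<forall>i\<in>{1..m}. h' i \<le> h i" "(\<Sum>i\<in>{1..m}. h' i) < (\<Sum>i\<in>{1..m}. h i)"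
      then show "\<exists>f. equitable_coloring_on (spider_square m l) L k (spider_V m h') f"
        using less.hyps less.prems spider_V_mono by blast
    qed
  next
    case 3
    then show ?thesis using short_legs_colorable km less.prems by blast
  qed
qed

theorem lemma2p3:
  fixes m k :: nat and l :: "nat \<Rightarrow> nat"
  assumes "m \<ge> 3"
    and "\<forall>i. 1 \<le> i \<and> i \<le> m \<longrightarrow> l i \<ge> 1"
    and "\<forall>i j. 1 \<le> i \<and> i \<le> j \<and> j \<le> m \<longrightarrow> l i \<le> l j"
    and "k \<ge> m + 3"
  shows "equitably_choosable (spider_V m l) (graph_square (spider_V m l) (spider_E m l)) k
           TYPE('c)"
  unfolding equitably_choosable_def
proof (intro allI impI)
  fix L :: "nat \<times> nat \<Rightarrow> 'c set"
  assume "k_assignment (spider_V m l) k L"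
  then obtain f where "equitable_coloring_on (spider_square m l) L k (spider_V m l) f"
    using subspider_colorable[OF assms(4)] unfolding k_assignment_def by blast
  moreover have "k > 0" using assms(4) by simp
  ultimately show "\<exists>f. equitable_L_coloring (spider_V m l) (spider_square m l) k L f"
    using equitable_L_coloring_if_equitable_coloring_on by blast
qed

end
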